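(* Let $T$ be a minimal tree. (i) If $T=[[A,B],C]$ for rooted trees $A,B,C$, then $\max\{|A|,|B|\}\le |C|$. (ii) If $T=[[A,B],[[D,E],C]]$ for rooted trees $A,B,C,D,E$, then $\max\{|D|,|E|\}\le\min\{|A|,|B|\}$.
   Context: A rooted tree $T$ is a finite tree with a distinguished vertex, its root; its order $|T|$ is its number of vertices. For vertices $u,v$, the infimum of $u$ and $v$ is the vertex common to the path from $u$ to the root and the path from $v$ to the root that is furthest from the root. A set $X\subseteq V(T)$ is infima closed if the infimum of any two elements of $X$ lies in $X$. $I(T)$ denotes the number of nonempty infima closed subsets of $V(T)$. For $n\ge1$, $m_n=\min\{I(T): |T|=n\}$; a rooted tree $T$ with $I(T)=m_{|T|}$ is called minimal. $[B_1,\dots,B_k]$ denotes the rooted tree whose root has exactly $k$ children, the branches (subtrees of descendants) rooted at these children being $B_1,\dots,B_k$. *)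

theory Defs
  imports Main
begin

text \<open>Rooted trees: a node with a (finite) list of branches.  The order of the
  children is irrelevant for everything below.\<close>
datatype rtree = Node "rtree list"

text \<open>Vertices of a rooted tree, encoded as paths (lists of child indices) from the root;
  the root is the empty path.\<close>
function vertices :: "rtree \<Rightarrow> nat list set" where
  "vertices (Node ts) =
     insert [] (\<Union>(i, t) \<in> set (zip [0..<length ts] ts). (Cons i) ` vertices t)"
  by pat_completeness auto
termination
  by (relation "measure size") (auto dest!: set_zip_rightD simp: le_imp_less_Suc size_list_estimation')

definition order :: "rtree \<Rightarrow> nat" where
  "order T = card (vertices T)"

text \<open>Infimum of two vertices: the common ancestor furthest from the root,
  i.e. the longest common prefix of the two paths.\<close>
fun inf_v :: "nat list \<Rightarrow> nat list \<Rightarrow> nat list" where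
  "inf_v (x # xs) (y # ys) = (if x = y then x # inf_v xs ys else [])"
| "inf_v _ _ = []"

definition infima_closed :: "nat list set \<Rightarrow> bool" where
  "infima_closed X \<longleftrightarrow> (\<forall>u\<in>X. \<forall>v\<in>X. inf_v u v \<in> X)"

definition I :: "rtree \<Rightarrow> nat" where
  "I T = card {X. X \<subseteq> vertices T \<and> X \<noteq> {} \<and> infima_closed X}"

definition m :: "nat \<Rightarrow> nat" where
  "m n = Min {I T | T. order T = n}"

definition minimal :: "rtree \<Rightarrow> bool" where
  "minimal T \<longleftrightarrow> I T = m (order T)"

end

theory Submission
  imports Defs
begin

text \<open>Splitting an infima closed set at a binary root into its branches shows
  I([X, Y]) + 3 = (I X + 2) (I Y + 2); so J = I + 2 satisfies J([X, Y]) = J X J Y - 1.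
  Deleting a leaf strictly decreases I, hence m is strictly increasing, and the
  children of a binary vertex of a minimal tree are themselves minimal, so their
  J-values are ordered like their orders.  If one of the inequalities failed,
  exchanging two subtrees would preserve the order of the tree and strictly
  decrease J, contradicting minimality.\<close>

lemma vertices_snoc:
  "vertices (Node (ts @ [t])) = vertices (Node ts) \<union> Cons (length ts) ` vertices t"
  by (auto simp: zip_append)

lemma vertices_Node_single: "vertices (Node [X]) = insert [] (Cons 0 ` vertices X)"
  using vertices_snoc[of "[]" X] by auto

abbreviation join :: "nat list set \<Rightarrow> nat list set \<Rightarrow> nat list set" where
  "join S\<^sub>0 S\<^sub>1 \<equiv> insert [] (Cons 0 ` S\<^sub>0 \<union> Cons 1 ` S\<^sub>1)"

lemma vertices_Node_pair:
  "vertices (Node [X, Y]) = join (vertices X) (vertices Y)"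
  using vertices_snoc[of "[X]" Y] vertices_Node_single[of X] by auto

lemma finite_vertices: "finite (vertices T)"
  by (induction T) (auto dest: set_zip_rightD)

lemma Nil_in_vertices: "[] \<in> vertices T"
  by (cases T) auto

lemma hd_vertex_less_length: "u \<in> vertices (Node ts) \<Longrightarrow> u \<noteq> [] \<Longrightarrow> hd u < length ts"
  by (auto dest: set_zip_leftD)

lemma order_ge_1: "order T \<ge> 1"
  unfolding order_def using Nil_in_vertices finite_vertices
  by (metis One_nat_def Suc_leI card_gt_0_iff empty_iff)

lemma order_Node_single: "order (Node [X]) = order X + 1"
  unfolding order_def vertices_Node_single
  by (subst card_insert_disjoint) (auto simp: finite_vertices card_image)

lemma order_Node_pair: "order (Node [X, Y]) = order X + order Y + 1"
  unfolding order_def vertices_Node_pair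
  by (subst card_insert_disjoint, simp_all add: finite_vertices image_iff,
      subst card_Un_disjoint) (auto simp: finite_vertices card_image)

lemma ex_order: "n \<ge> 1 \<Longrightarrow> \<exists>T. order T = n"
proof (induction n rule: dec_induct)
  case base
  have "order (Node []) = 1" by (simp add: order_def)
  then show ?case by blast
next
  case (step n)
  then show ?case by (metis order_Node_single Suc_eq_plus1)
qed

text \<open>Removing the last vertex of the rightmost branch leaves a tree.\<close>
lemma ex_vertex_removal:
  "ts \<noteq> [] \<Longrightarrow> \<exists>v T'. v \<in> vertices (Node ts) \<and> vertices T' = vertices (Node ts) - {v}"
proof (induction "Node ts" arbitrary: ts rule: measure_induct_rule[where f = size])
  case (less ts)
  obtain xs t where ts: "ts = xs @ [t]"
    using less.prems by (metis rev_exhaust)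
  have new: "length xs # v \<notin> vertices (Node xs)" for v
    using hd_vertex_less_length[of "length xs # v" xs] by auto
  show ?case
  proof (cases "t = Node []")
    case True
    have "[length xs] \<in> vertices (Node ts)"
      using ts True by (simp add: vertices_snoc)
    moreover have "vertices (Node xs) = vertices (Node ts) - {[length xs]}"
      using ts True new by (auto simp: vertices_snoc)
    ultimately show ?thesis by blast
  next
    case False
    then obtain us where t: "t = Node us" "us \<noteq> []"
      by (metis rtree.exhaust)
    have "size t < size (Node ts)"
      using ts by (simp add: size_list_estimation')
    then obtain v t' where v: "v \<in> vertices t" "vertices t' = vertices t - {v}"
      using less.hyps[of us] t by blast
    have "length xs # v \<in> vertices (Node ts)"
      using ts v by (simp add: vertices_snoc)
    moreover have "vertices (Node (xs @ [t'])) = vertices (Node ts) - {length xs # v}"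
      using ts v new by (auto simp: vertices_snoc simp del: vertices.simps)
    ultimately show ?thesis by blast
  qed
qed

definition closed_subsets :: "nat list set \<Rightarrow> nat list set set" where
  "closed_subsets V = {X. X \<subseteq> V \<and> X \<noteq> {} \<and> infima_closed X}"

lemma I_eq_card_closed_subsets: "I T = card (closed_subsets (vertices T))"
  unfolding I_def closed_subsets_def ..

lemma finite_closed_subsets: "finite V \<Longrightarrow> finite (closed_subsets V)"
  unfolding closed_subsets_def by (rule finite_subset[of _ "Pow V"]) auto

lemma inf_v_self: "inf_v v v = v"
  by (induction v) auto

lemma infima_closed_image_Cons: "infima_closed (Cons a ` S) \<longleftrightarrow> infima_closed S"
  unfolding infima_closed_def by auto

lemma infima_closed_join:
  "infima_closed (join S\<^sub>0 S\<^sub>1) \<longleftrightarrow> infima_closed S\<^sub>0 \<and> infima_closed S\<^sub>1"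
  (is "infima_closed ?S \<longleftrightarrow> _")
proof
  assume closed: "infima_closed ?S"
  have Cons_inf: "inf_v (i # u) (i # v) \<in> ?S" if "i # u \<in> ?S" "i # v \<in> ?S" for i u v
    using closed that unfolding infima_closed_def by blast
  show "infima_closed S\<^sub>0 \<and> infima_closed S\<^sub>1"
    unfolding infima_closed_def
  proof (intro conjI ballI)
    show "inf_v u v \<in> S\<^sub>0" if "u \<in> S\<^sub>0" "v \<in> S\<^sub>0" for u v
      using Cons_inf[of 0 u v] that by auto
    show "inf_v u v \<in> S\<^sub>1" if "u \<in> S\<^sub>1" "v \<in> S\<^sub>1" for u v
      using Cons_inf[of 1 u v] that by auto
  qed
qed (auto simp: infima_closed_def)

lemma branch_of_join:
  "{u. 0 # u \<in> join S\<^sub>0 S\<^sub>1} = S\<^sub>0" "{u. 1 # u \<in> join S\<^sub>0 S\<^sub>1} = S\<^sub>1"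
  by auto

lemma closed_subsets_join:
  "closed_subsets (join V\<^sub>0 V\<^sub>1) =
     case_prod join ` (insert {} (closed_subsets V\<^sub>0) \<times> insert {} (closed_subsets V\<^sub>1))
     \<union> image (Cons 0) ` closed_subsets V\<^sub>0 \<union> image (Cons 1) ` closed_subsets V\<^sub>1"
  (is "?L = ?R")
proof
  show "?R \<subseteq> ?L"
  proof (intro Un_least image_subsetI)
    fix p assume "p \<in> insert {} (closed_subsets V\<^sub>0) \<times> insert {} (closed_subsets V\<^sub>1)"
    then show "case_prod join p \<in> ?L"
      using infima_closed_join[of "fst p" "snd p"]
      by (cases p) (auto simp: closed_subsets_def infima_closed_def)
  qed (auto simp: closed_subsets_def infima_closed_image_Cons)
  show "?L \<subseteq> ?R"
  proof
    fix S assume "S \<in> ?L"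
    then have sub: "S \<subseteq> join V\<^sub>0 V\<^sub>1" and closed: "infima_closed S" and "S \<noteq> {}"
      unfolding closed_subsets_def by auto
    define S\<^sub>0 where "S\<^sub>0 = {u. 0 # u \<in> S}"
    define S\<^sub>1 where "S\<^sub>1 = {u. 1 # u \<in> S}"
    have branches: "S\<^sub>0 \<subseteq> V\<^sub>0" "S\<^sub>1 \<subseteq> V\<^sub>1" "S - {[]} = Cons 0 ` S\<^sub>0 \<union> Cons 1 ` S\<^sub>1"
      using sub unfolding S\<^sub>0_def S\<^sub>1_def by auto
    show "S \<in> ?R"
    proof (cases "[] \<in> S")
      case True
      then have S: "S = join S\<^sub>0 S\<^sub>1"
        using branches(3) by (metis insert_Diff)
      then have "infima_closed S\<^sub>0" "infima_closed S\<^sub>1"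
        using closed infima_closed_join by simp_all
      then have "(S\<^sub>0, S\<^sub>1) \<in> insert {} (closed_subsets V\<^sub>0) \<times> insert {} (closed_subsets V\<^sub>1)"
        using branches by (simp add: closed_subsets_def)
      then show ?thesis
        unfolding S by (intro UnI1 image_eqI[where x = "(S\<^sub>0, S\<^sub>1)"]) simp_all
    next
      case False
      text \<open>The infimum of vertices in different branches is the root.\<close>
      have "S\<^sub>0 = {} \<or> S\<^sub>1 = {}"
        using closed False unfolding S\<^sub>0_def S\<^sub>1_def infima_closed_def by fastforce
      then consider "S = Cons 0 ` S\<^sub>0" | "S = Cons 1 ` S\<^sub>1"
        using False branches by blast
      then show ?thesis
      proof cases
        case 1
        then have "S\<^sub>0 \<in> closed_subsets V\<^sub>0"
          using branches closed \<open>S \<noteq> {}\<close> by (simp add: closed_subsets_def infima_closed_image_Cons)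
        then show ?thesis using 1 by blast
      next
        case 2
        then have "S\<^sub>1 \<in> closed_subsets V\<^sub>1"
          using branches closed \<open>S \<noteq> {}\<close> by (simp add: closed_subsets_def infima_closed_image_Cons)
        then show ?thesis using 2 by blast
      qed
    qed
  qed
qed

lemma card_insert_empty_closed_subsets:
  "finite V \<Longrightarrow> card (insert {} (closed_subsets V)) = card (closed_subsets V) + 1"
  by (simp add: closed_subsets_def finite_closed_subsets[unfolded closed_subsets_def])

lemma card_closed_subsets_join:
  assumes "finite V\<^sub>0" "finite V\<^sub>1"
  shows "card (closed_subsets (join V\<^sub>0 V\<^sub>1)) + 3 =
           (card (closed_subsets V\<^sub>0) + 2) * (card (closed_subsets V\<^sub>1) + 2)"
proof -
  let ?P = "insert {} (closed_subsets V\<^sub>0) \<times> insert {} (closed_subsets V\<^sub>1)"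
  let ?R\<^sub>0 = "image (Cons 0) ` closed_subsets V\<^sub>0"
  let ?R\<^sub>1 = "image (Cons 1) ` closed_subsets V\<^sub>1"
  have inj_join: "inj (case_prod join)"
  proof (rule injI)
    fix p q :: "nat list set \<times> nat list set"
    assume "case_prod join p = case_prod join q"
    then show "p = q"
      using branch_of_join[of "fst p" "snd p"] branch_of_join[of "fst q" "snd q"]
      by (simp add: split_beta prod_eq_iff)
  qed
  have inj_image_Cons: "inj (image (Cons i))" for i :: nat
    by (simp add: inj_def inj_image_eq_iff)
  have fin: "finite (case_prod join ` ?P)" "finite ?R\<^sub>0" "finite ?R\<^sub>1"
    using assms by (simp_all add: finite_closed_subsets)
  have "[] \<in> S" if "S \<in> case_prod join ` ?P" for S
    using that by auto
  moreover have "[] \<notin> S" if "S \<in> ?R\<^sub>0 \<union> ?R\<^sub>1" for S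
    using that by auto
  ultimately have join_notin: "S \<notin> ?R\<^sub>0" "S \<notin> ?R\<^sub>1" if "S \<in> case_prod join ` ?P" for S
    using that by blast+
  have "\<exists>u \<in> S. hd u = 0" if "S \<in> ?R\<^sub>0" for S
    using that by (auto simp: closed_subsets_def)
  moreover have "\<forall>u \<in> S. hd u = 1" if "S \<in> ?R\<^sub>1" for S
    using that by auto
  ultimately have R\<^sub>0_notin: "S \<notin> ?R\<^sub>1" if "S \<in> ?R\<^sub>0" for S
    using that by (metis zero_neq_one)
  have disjoint:
    "case_prod join ` ?P \<inter> ?R\<^sub>0 = {}" "(case_prod join ` ?P \<union> ?R\<^sub>0) \<inter> ?R\<^sub>1 = {}"
    by (intro Int_emptyI; metis Un_iff join_notin R\<^sub>0_notin)+
  have "card (closed_subsets (join V\<^sub>0 V\<^sub>1)) =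
          card ?P + card (closed_subsets V\<^sub>0) + card (closed_subsets V\<^sub>1)"
    unfolding closed_subsets_join
    by (simp only: card_Un_disjoint fin disjoint finite_UnI
        card_image inj_on_subset[OF inj_join subset_UNIV] inj_on_subset[OF inj_image_Cons subset_UNIV])
  moreover have "card ?P = (card (closed_subsets V\<^sub>0) + 1) * (card (closed_subsets V\<^sub>1) + 1)"
    by (simp only: card_cartesian_product card_insert_empty_closed_subsets assms)
  ultimately show ?thesis
    by simp
qed

lemma I_Node_pair: "I (Node [X, Y]) + 3 = (I X + 2) * (I Y + 2)"
  unfolding I_eq_card_closed_subsets vertices_Node_pair
  by (rule card_closed_subsets_join[OF finite_vertices finite_vertices])

lemma I_le_power_order: "I T \<le> 2 ^ order T"
proof -
  have "closed_subsets (vertices T) \<subseteq> Pow (vertices T)"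
    unfolding closed_subsets_def by auto
  then have "card (closed_subsets (vertices T)) \<le> card (Pow (vertices T))"
    by (simp add: card_mono finite_vertices)
  then show ?thesis
    unfolding I_eq_card_closed_subsets order_def by (simp add: card_Pow finite_vertices)
qed

lemma I_less_if_remove_vertex:
  assumes "v \<in> vertices T" "vertices T' = vertices T - {v}"
  shows "I T' < I T"
proof -
  have "closed_subsets (vertices T') \<subset> closed_subsets (vertices T)"
  proof
    show "closed_subsets (vertices T') \<subseteq> closed_subsets (vertices T)"
      using assms unfolding closed_subsets_def by auto
    have "{v} \<in> closed_subsets (vertices T) - closed_subsets (vertices T')"
      using assms unfolding closed_subsets_def infima_closed_def by (auto simp: inf_v_self)
    then show "closed_subsets (vertices T') \<noteq> closed_subsets (vertices T)"
      by blast
  qed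
  then show ?thesis
    unfolding I_eq_card_closed_subsets
    by (simp add: psubset_card_mono finite_closed_subsets finite_vertices)
qed

lemma order_remove_vertex:
  assumes "v \<in> vertices T" "vertices T' = vertices T - {v}"
  shows "order T' + 1 = order T"
  using assms finite_vertices unfolding order_def
  by (metis card_Suc_Diff1 Suc_eq_plus1)

lemma finite_I_of_order: "finite {I T | T. order T = n}"
  by (rule finite_subset[of _ "{..2 ^ n}"]) (auto intro: I_le_power_order)

lemma m_le_I: "m (order T) \<le> I T"
  unfolding m_def by (rule Min_le[OF finite_I_of_order]) blast

lemma ex_I_eq_m: "\<exists>T'. order T' = order T \<and> I T' = m (order T)"
proof -
  have "m (order T) \<in> {I T' | T'. order T' = order T}"
    unfolding m_def by (rule Min_in[OF finite_I_of_order]) blast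
  then show ?thesis by auto
qed

lemma m_less_Suc: assumes "n \<ge> 1" shows "m n < m (Suc n)"
proof -
  obtain T\<^sub>0 where "order T\<^sub>0 = Suc n"
    using ex_order[of "Suc n"] by auto
  then obtain T where T: "order T = Suc n" "I T = m (Suc n)"
    using ex_I_eq_m[of T\<^sub>0] by auto
  obtain ts where ts: "T = Node ts"
    by (cases T)
  have "ts \<noteq> []"
    using T(1) assms ts by (auto simp: order_def)
  then obtain v T' where v: "v \<in> vertices T" "vertices T' = vertices T - {v}"
    using ex_vertex_removal ts by blast
  have "m n \<le> I T'"
    using m_le_I[of T'] order_remove_vertex[OF v] T(1) by simp
  also have "\<dots> < m (Suc n)"
    using I_less_if_remove_vertex[OF v] T(2) by simp
  finally show ?thesis .
qed

lemma m_strict_mono: "1 \<le> a \<Longrightarrow> a < b \<Longrightarrow> m a < m b"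
  by (rule lift_Suc_mono_less_ivl[where N = "{1..}"]) (auto intro: m_less_Suc)

lemma m_mono: "1 \<le> a \<Longrightarrow> a \<le> b \<Longrightarrow> m a \<le> m b"
  using m_strict_mono by (cases "a = b") (auto intro: less_imp_le)

definition J :: "rtree \<Rightarrow> int" where
  "J T = int (I T) + 2"

lemma J_Node_pair: "J (Node [X, Y]) = J X * J Y - 1"
proof -
  have "int (I (Node [X, Y]) + 3) = int ((I X + 2) * (I Y + 2))"
    by (simp only: I_Node_pair)
  then show ?thesis
    unfolding J_def by (simp add: algebra_simps)
qed

lemma J_ge_2: "J T \<ge> 2"
  by (simp add: J_def)

lemma minimal_iff_J_le: "minimal T \<longleftrightarrow> (\<forall>T'. order T' = order T \<longrightarrow> J T \<le> J T')"
proof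
  assume "minimal T"
  then show "\<forall>T'. order T' = order T \<longrightarrow> J T \<le> J T'"
    using m_le_I by (simp add: minimal_def J_def) metis
next
  assume le: "\<forall>T'. order T' = order T \<longrightarrow> J T \<le> J T'"
  obtain T' where "order T' = order T" "I T' = m (order T)"
    using ex_I_eq_m by blast
  then show "minimal T"
    using le m_le_I[of T] by (force simp: minimal_def J_def)
qed

lemma minimal_cong: "minimal T \<Longrightarrow> order T' = order T \<Longrightarrow> J T' = J T \<Longrightarrow> minimal T'"
  by (simp add: minimal_iff_J_le)

lemma minimal_Node_pair_left: "minimal (Node [X, Y]) \<Longrightarrow> minimal X"
  unfolding minimal_iff_J_le
proof (intro allI impI)
  fix X' assume min: "\<forall>T'. order T' = order (Node [X, Y]) \<longrightarrow> J (Node [X, Y]) \<le> J T'"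
    and "order X' = order X"
  then have "J X * J Y \<le> J X' * J Y"
    using min[rule_format, of "Node [X', Y]"] by (simp add: order_Node_pair J_Node_pair)
  then show "J X \<le> J X'"
    using J_ge_2[of Y] by simp
qed

lemma minimal_Node_pair:
  assumes "minimal (Node [X, Y])"
  shows "minimal X" "minimal Y"
proof -
  show "minimal X"
    using assms by (rule minimal_Node_pair_left)
  have "minimal (Node [Y, X])"
    using assms by (rule minimal_cong) (simp_all add: order_Node_pair J_Node_pair ac_simps)
  then show "minimal Y"
    by (rule minimal_Node_pair_left)
qed

lemma J_less_if_minimal: "minimal X \<Longrightarrow> minimal Y \<Longrightarrow> order X < order Y \<Longrightarrow> J X < J Y"
  using m_strict_mono[OF order_ge_1] by (simp add: minimal_def J_def)

lemma J_le_if_minimal: "minimal X \<Longrightarrow> minimal Y \<Longrightarrow> order X \<le> order Y \<Longrightarrow> J X \<le> J Y"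
  using m_mono[OF order_ge_1] by (simp add: minimal_def J_def)

lemma minimal_nephew_le_uncle:
  assumes min: "minimal (Node [Node [A, B], C])"
  shows "order A \<le> order C"
proof (rule ccontr)
  assume "\<not> order A \<le> order C"
  then have "J C < J A"
    using J_less_if_minimal minimal_Node_pair min by (meson not_le)
  moreover have "J (Node [Node [A, B], C]) \<le> J (Node [Node [C, B], A])"
    using min by (simp add: minimal_iff_J_le order_Node_pair)
  ultimately show False
    by (simp add: J_Node_pair algebra_simps)
qed

lemma minimal_cousin_once_removed_le:
  assumes min: "minimal (Node [Node [A, B], Node [Node [D, E], C]])"
    (is "minimal ?T")
  shows "order D \<le> order A"
proof (rule ccontr)
  assume "\<not> order D \<le> order A"
  have minimal: "minimal A" "minimal B" "minimal C" "minimal D" "minimal E"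
    using minimal_Node_pair min by meson+
  then have "J A < J D"
    using J_less_if_minimal \<open>\<not> order D \<le> order A\<close> by (meson not_le)
  have J_le: "J ?T \<le> J T'" if "order T' = order ?T" for T'
    using min that by (simp add: minimal_iff_J_le)
  show False
  proof (cases "order E \<le> order B")
    case True
    then have "J E \<le> J B"
      using J_le_if_minimal minimal by blast
    then have "0 \<le> J C * (J B - J E)"
      using J_ge_2[of C] by simp
    then have "0 < (J D - J A) * (J B + J C * (J B - J E))"
      using \<open>J A < J D\<close> J_ge_2[of B] by (simp add: zero_less_mult_iff)
    also have "\<dots> = J ?T - J (Node [Node [D, B], Node [Node [A, E], C]])"
      by (simp add: J_Node_pair algebra_simps)
    finally show False
      using J_le[of "Node [Node [D, B], Node [Node [A, E], C]]"] by (simp add: order_Node_pair)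
  next
    case False
    then have "J B < J E"
      using J_less_if_minimal minimal by (meson not_le)
    then have "0 < J D * J E - J A * J B"
      using \<open>J A < J D\<close> J_ge_2[of A] J_ge_2[of B] by (simp add: mult_strict_mono)
    also have "\<dots> = J ?T - J (Node [Node [D, E], Node [Node [A, B], C]])"
      by (simp add: J_Node_pair algebra_simps)
    finally show False
      using J_le[of "Node [Node [D, E], Node [Node [A, B], C]]"] by (simp add: order_Node_pair)
  qed
qed

theorem lemma3p2:
  fixes T :: rtree
  assumes "minimal T"
  shows "(\<forall>A B C. T = Node [Node [A, B], C] \<longrightarrow> max (order A) (order B) \<le> order C)
       \<and> (\<forall>A B C D E. T = Node [Node [A, B], Node [Node [D, E], C]] \<longrightarrow>
            max (order D) (order E) \<le> min (order A) (order B))"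
proof (intro conjI allI impI)
  fix A B C assume T: "T = Node [Node [A, B], C]"
  have "minimal (Node [Node [B, A], C])"
    using assms unfolding T by (rule minimal_cong) (simp_all add: order_Node_pair J_Node_pair ac_simps)
  then show "max (order A) (order B) \<le> order C"
    using minimal_nephew_le_uncle assms T by simp
next
  fix A B C D E assume T: "T = Node [Node [A, B], Node [Node [D, E], C]]"
  have swap: "minimal (Node [Node [A', B'], Node [Node [D', E'], C]])"
    if "J A' * J B' = J A * J B" "order A' + order B' = order A + order B"
      and "J D' * J E' = J D * J E" "order D' + order E' = order D + order E" for A' B' D' E'
    using assms unfolding T by (rule minimal_cong) (simp_all add: order_Node_pair J_Node_pair that)
  show "max (order D) (order E) \<le> min (order A) (order B)"
    using minimal_cousin_once_removed_le[OF swap[of A B D E]]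
      minimal_cousin_once_removed_le[OF swap[of B A D E]]
      minimal_cousin_once_removed_le[OF swap[of A B E D]]
      minimal_cousin_once_removed_le[OF swap[of B A E D]]
    by (simp add: ac_simps)
qed

end
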